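(* Let $\xi$ be a probability measure on $\mathbb{Z}_+$ with $\xi(0)>0$, $\sum_kk\xi(k)=1$, whose support generates $\mathbb{Z}$. (i) For every $n\geq1$ with $\mathrm{GW}_\xi(\#t=n)>0$, the law $\mathrm{GW}^{(n)}_\xi=\mathrm{GW}_\xi(\cdot\mid\#t=n)$ on rooted unordered trees equals $\mathsf{Q}^q_n$, where $q_1((1))=1$ and for $n\geq2$ (with $\mathrm{GW}_\xi(\#t=n+1)>0$) and $\lambda=(\lambda_1,\dots,\lambda_p)\in\mathcal{P}_n$, $$q_n(\lambda)=\frac{p!}{\prod_{j\geq1}m_j(\lambda)!}\xi(p)\frac{\prod_{i=1}^p\mathrm{GW}_\xi(\#t=\lambda_i)}{\mathrm{GW}_\xi(\#t=n+1)}.$$ (ii) Let $X_1,X_2,\dots$ be i.i.d. with $\mathbb{P}(X_1=k)=\mathrm{GW}_\xi(\#t=k)$ and $\tau_p=X_1+\dots+X_p$. Then $q_n(p(\lambda)=p)=\xi(p)\mathbb{P}(\tau_p=n)/\mathbb{P}(\tau_1=n+1)$, and $q_n(\cdot\mid p(\lambda)=p)$ is the law of the non-increasing rearrangement of $(X_1,\dots,X_p)$ conditionally on $X_1+\dots+X_p=n$.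
   Context: $\mathrm{GW}_\xi$ is the Galton--Watson law on plane trees, $\mathrm{GW}_\xi(\{t\})=\prod_{u\in t}\xi(c_u(t))$ ($c_u$ the number of children), pushed forward to rooted unordered trees; $\#t$ is the number of vertices. $\mathcal{P}_n$ is the set of partitions of $n$, $p(\lambda)$ the number of parts and $m_j(\lambda)$ the number of parts equal to $j$. The laws $\mathsf{Q}^q_n$ on trees with $n$ vertices: $\mathsf{Q}^q_1$ is the law of the one-vertex tree; $\mathsf{Q}^q_{n+1}$ is the law of the tree whose root has as children the roots of independent trees $T^{(1)},\dots,T^{(p(\Lambda))}$ with laws $\mathsf{Q}^q_{\Lambda_i}$, where $\Lambda\sim q_n$. *)

theory Defs
  imports "HOL-Probability.Probability_Mass_Function" "HOL-Library.Multiset"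
begin

datatype ptree = PNode "ptree list"

datatype utree = UNode "utree multiset"

fun ptsize :: "ptree \<Rightarrow> nat" where
  "ptsize (PNode ts) = Suc (sum_list (map ptsize ts))"

fun forget :: "ptree \<Rightarrow> utree" where
  "forget (PNode ts) = UNode (mset (map forget ts))"

fun gw_w :: "nat pmf \<Rightarrow> ptree \<Rightarrow> real" where
  "gw_w \<xi> (PNode ts) = pmf \<xi> (length ts) * prod_list (map (gw_w \<xi>) ts)"

definition GW_size :: "nat pmf \<Rightarrow> nat \<Rightarrow> real" where
  "GW_size \<xi> n = (\<Sum>t\<in>{t. ptsize t = n}. gw_w \<xi> t)"

text \<open>Mass function of GW_xi^(n) = GW_xi( . | #t = n), pushed forward to unordered trees.\<close>
definition gw_cond :: "nat pmf \<Rightarrow> nat \<Rightarrow> utree \<Rightarrow> real" where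
  "gw_cond \<xi> n u = (\<Sum>t\<in>{t. ptsize t = n \<and> forget t = u}. gw_w \<xi> t) / GW_size \<xi> n"

text \<open>A partition of n is a multiset of positive integers summing to n;
  p(lambda) = size lambda, m_j(lambda) = count lambda j.\<close>
definition partitions :: "nat \<Rightarrow> nat multiset set" where
  "partitions n = {lam. (\<forall>j\<in>#lam. 0 < j) \<and> sum_mset lam = n}"

text \<open>q n is a mass function on partitions of n. For n+2 vertices: sum over lambda
  (drawn from q (n+1)) of the probability that independent trees with laws Q_{lambda_i}
  form the multiset M of subtrees of the root.\<close>
function Qlaw :: "(nat \<Rightarrow> nat multiset \<Rightarrow> real) \<Rightarrow> nat \<Rightarrow> utree \<Rightarrow> real" where
  "Qlaw q 0 u = 0"
| "Qlaw q (Suc 0) u = (if u = UNode {#} then 1 else 0)"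
| "Qlaw q (Suc (Suc n)) (UNode M) =
     (\<Sum>lam\<in>partitions (Suc n). q (Suc n) lam *
        (\<Sum>ts\<in>{ts. mset ts = M}.
           (if length ts = size lam then
              (\<Prod>i<length ts. (if sorted_list_of_multiset lam ! i \<le> Suc n
                  then Qlaw q (sorted_list_of_multiset lam ! i) (ts ! i) else 0))
            else 0)))"
  by pat_completeness auto
termination
  by (relation "Wellfounded.measure (\<lambda>(q, n, u). n)") auto

definition gw_q :: "nat pmf \<Rightarrow> nat \<Rightarrow> nat multiset \<Rightarrow> real" where
  "gw_q \<xi> n lam =
     (if lam \<notin> partitions n then 0
      else if n = 1 then (if lam = {#1#} then 1 else 0)
      else fact (size lam) / (\<Prod>j\<in>set_mset lam. fact (count lam j)) * pmf \<xi> (size lam)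
           * (\<Prod>i\<in>#lam. GW_size \<xi> i) / GW_size \<xi> (n + 1))"

text \<open>P(tau_p = n) for tau_p = X_1 + ... + X_p, X_i iid with P(X = k) = GW_xi(#t = k).\<close>
definition tau_prob :: "nat pmf \<Rightarrow> nat \<Rightarrow> nat \<Rightarrow> real" where
  "tau_prob \<xi> p n = (\<Sum>xs\<in>{xs. length xs = p \<and> sum_list xs = n}. prod_list (map (GW_size \<xi>) xs))"

text \<open>P(non-increasing rearrangement of (X_1..X_p) equals lambda, and X_1+...+X_p = n);
  the rearrangement is identified with the multiset of its entries.\<close>
definition rearr_prob :: "nat pmf \<Rightarrow> nat \<Rightarrow> nat \<Rightarrow> nat multiset \<Rightarrow> real" where
  "rearr_prob \<xi> p n lam =
     (\<Sum>xs\<in>{xs. length xs = p \<and> sum_list xs = n \<and> mset xs = lam}. prod_list (map (GW_size \<xi>) xs))"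

definition generates_int :: "nat set \<Rightarrow> bool" where
  "generates_int S \<longleftrightarrow>
     (\<forall>G::int set. 0 \<in> G \<and> (\<forall>x\<in>G. \<forall>y\<in>G. x - y \<in> G) \<and> int ` S \<subseteq> G \<longrightarrow> G = UNIV)"

end

theory Submission
  imports Defs "HOL-Combinatorics.Multiset_Permutations"
begin

text \<open>
  The Galton--Watson weight of an unordered tree with root degree \<open>p\<close> and children \<open>M\<close> is
  \<open>\<xi>(p)\<close> times the number of orderings of \<open>M\<close> times the product of the weights of the children.
  Grouping the children by their sizes \<open>\<lambda>\<close>, the number of orderings factors as the number of
  orderings of \<open>\<lambda>\<close> times the number of orderings of \<open>M\<close> compatible with a fixed ordering
  of \<open>\<lambda>\<close>; dividing by \<open>GW(#t = n+1)\<close> and by \<open>\<Prod>\<^sub>i GW(#t = \<lambda>\<^sub>i)\<close> shows that the conditioned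
  tree chooses \<open>\<lambda>\<close> with probability \<open>q\<^sub>n(\<lambda>)\<close> and then independent conditioned subtrees,
  which gives (i) by induction on \<open>n\<close>. For (ii), \<open>q\<^sub>n(\<lambda>) = \<xi>(p) P(rearrangement = \<lambda>, \<tau>\<^sub>p = n) /
  P(\<tau>\<^sub>1 = n+1)\<close>, and summing over \<open>\<lambda>\<close> groups the sequences \<open>(X\<^sub>1,\<dots>,X\<^sub>p)\<close> by their multiset.
\<close>

primrec utsize :: "utree \<Rightarrow> nat" where
  "utsize (UNode M) = Suc (\<Sum>u\<in>#M. utsize u)"

lemma utsize_forget: "utsize (forget t) = ptsize t"
proof (induction t)
  case (PNode ts)
  then have "map utsize (map forget ts) = map ptsize ts" by simp
  moreover have "(\<Sum>u\<in>#mset (map forget ts). utsize u) = sum_list (map utsize (map forget ts))"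
    by (simp only: mset_map[symmetric] sum_mset_sum_list)
  ultimately show ?case by (simp only: forget.simps utsize.simps ptsize.simps)
qed

lemma ptsize_gt_0 [simp]: "0 < ptsize t"
  by (cases t) auto

lemma ptsize_neq_0 [simp]: "ptsize t \<noteq> 0"
  using ptsize_gt_0 by (rule gr_implies_not0)

lemma utsize_gt_0 [simp]: "0 < utsize u"
  by (cases u) auto

lemma utsize_neq_0 [simp]: "utsize u \<noteq> 0"
  using utsize_gt_0 by (rule gr_implies_not0)

lemma ptsize_eq_1_iff: "ptsize t = 1 \<longleftrightarrow> t = PNode []"
  by (cases t) (auto simp: sum_list_eq_0_iff)

lemma ptsize_eq_2_iff: "ptsize t = 2 \<longleftrightarrow> t = PNode [PNode []]"
proof (cases t)
  case (PNode ts)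
  have "sum_list (map ptsize ts) = 1 \<longleftrightarrow> ts = [PNode []]"
  proof
    assume "sum_list (map ptsize ts) = 1"
    then obtain s ss where ts: "ts = s # ss" and "ptsize s + sum_list (map ptsize ss) = 1"
      by (cases ts) auto
    then have "ptsize s = 1" "sum_list (map ptsize ss) = 0"
      using ptsize_neq_0[of s] by linarith+
    then show "ts = [PNode []]" using ts ptsize_eq_1_iff by auto
  qed simp
  with PNode show ?thesis by (simp add: numeral_2_eq_2)
qed

lemma utsize_eq_1_iff: "utsize u = 1 \<longleftrightarrow> u = UNode {#}"
  by (cases u) (auto simp: sum_mset_0_iff)

lemma finite_ptsize_le: "finite {t. ptsize t \<le> n}"
proof (induction n)
  case 0
  then show ?case by simp
next
  case (Suc n)
  have "{t. ptsize t \<le> Suc n} \<subseteq> PNode ` {ts. set ts \<subseteq> {t. ptsize t \<le> n} \<and> length ts \<le> n}"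
  proof
    fix t assume "t \<in> {t. ptsize t \<le> Suc n}"
    then obtain ts where t: "t = PNode ts" and sum_le: "sum_list (map ptsize ts) \<le> n"
      by (cases t) auto
    have "length ts \<le> sum_list (map ptsize ts)"
      using sum_list_mono[of ts "\<lambda>_. 1::nat" ptsize] by (simp add: sum_list_triv Suc_le_eq)
    moreover have "ptsize s \<le> n" if "s \<in> set ts" for s
      using that sum_le member_le_sum_list[of "ptsize s" "map ptsize ts"] by simp
    ultimately show "t \<in> PNode ` {ts. set ts \<subseteq> {t. ptsize t \<le> n} \<and> length ts \<le> n}"
      using t sum_le by auto
  qed
  then show ?case
    by (rule finite_subset) (intro finite_imageI finite_lists_length_le Suc)
qed

lemma finite_ptsize_eq: "finite {t. ptsize t = n}"
  by (rule finite_subset[OF _ finite_ptsize_le[of n]]) auto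

lemma finite_forget_eq: "finite {t. forget t = u}"
  by (rule finite_subset[OF _ finite_ptsize_eq[of "utsize u"]]) (auto simp: utsize_forget)

lemma finite_map_forget_eq: "finite {ts. map forget ts = us}"
proof (induction us)
  case (Cons u us)
  have "{ts. map forget ts = u # us} = (\<lambda>(t, ts). t # ts) ` ({t. forget t = u} \<times> {ts. map forget ts = us})"
    by (auto simp: map_eq_Cons_conv)
  then show ?case by (simp add: finite_forget_eq Cons)
qed simp

lemma gw_w_nonneg: "gw_w \<xi> t \<ge> 0"
  by (induction t) (auto intro!: mult_nonneg_nonneg prod_list_nonneg)

lemma GW_size_nonneg: "GW_size \<xi> n \<ge> 0"
  unfolding GW_size_def by (intro sum_nonneg gw_w_nonneg)

lemma GW_size_0: "GW_size \<xi> 0 = 0"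
  by (simp add: GW_size_def)

lemma GW_size_1: "GW_size \<xi> 1 = pmf \<xi> 0"
proof -
  have "{t. ptsize t = 1} = {PNode []}" using ptsize_eq_1_iff by auto
  then show ?thesis by (simp add: GW_size_def)
qed

lemma GW_size_2: "GW_size \<xi> 2 = pmf \<xi> 1 * pmf \<xi> 0"
proof -
  have "{t. ptsize t = 2} = {PNode [PNode []]}" using ptsize_eq_2_iff by auto
  then show ?thesis by (simp add: GW_size_def)
qed

definition gw_uweight :: "nat pmf \<Rightarrow> utree \<Rightarrow> real" where
  "gw_uweight \<xi> u = (\<Sum>t\<in>{t. forget t = u}. gw_w \<xi> t)"

lemma gw_uweight_nonneg: "gw_uweight \<xi> u \<ge> 0"
  unfolding gw_uweight_def by (intro sum_nonneg gw_w_nonneg)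

lemma gw_uweight_le_GW_size: "gw_uweight \<xi> u \<le> GW_size \<xi> (utsize u)"
  unfolding gw_uweight_def GW_size_def
  by (intro sum_mono2 finite_ptsize_eq gw_w_nonneg) (auto simp: utsize_forget)

lemma gw_cond_eq_gw_uweight:
  "gw_cond \<xi> n u = (if utsize u = n then gw_uweight \<xi> u else 0) / GW_size \<xi> n"
proof -
  have "{t. ptsize t = n \<and> forget t = u} = (if utsize u = n then {t. forget t = u} else {})"
    by (auto simp flip: utsize_forget)
  then show ?thesis by (simp add: gw_cond_def gw_uweight_def)
qed

lemma sum_map_forget_eq:
  "(\<Sum>ts\<in>{ts. map forget ts = us}. \<Prod>t\<leftarrow>ts. gw_w \<xi> t) = (\<Prod>u\<leftarrow>us. gw_uweight \<xi> u)"
proof (induction us)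
  case (Cons u us)
  let ?A = "{t. forget t = u}" and ?B = "{ts. map forget ts = us}"
  have "{ts. map forget ts = u # us} = (\<lambda>(t, ts). t # ts) ` (?A \<times> ?B)"
    by (auto simp: map_eq_Cons_conv)
  moreover have "inj_on (\<lambda>(t, ts). t # ts) (?A \<times> ?B)"
    by (auto simp: inj_on_def)
  ultimately have "(\<Sum>ts\<in>{ts. map forget ts = u # us}. \<Prod>t\<leftarrow>ts. gw_w \<xi> t)
      = (\<Sum>(t, ts)\<in>?A \<times> ?B. gw_w \<xi> t * (\<Prod>t\<leftarrow>ts. gw_w \<xi> t))"
    by (simp only: sum.reindex) (simp add: case_prod_beta)
  also have "\<dots> = (\<Sum>t\<in>?A. \<Sum>ts\<in>?B. gw_w \<xi> t * (\<Prod>t\<leftarrow>ts. gw_w \<xi> t))"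
    by (rule sum.cartesian_product[symmetric])
  also have "\<dots> = gw_uweight \<xi> u * (\<Prod>u\<leftarrow>us. gw_uweight \<xi> u)"
    unfolding Cons.IH[symmetric] by (simp only: gw_uweight_def sum_product)
  finally show ?case by simp
qed simp

lemma gw_uweight_UNode:
  "gw_uweight \<xi> (UNode M)
     = pmf \<xi> (size M) * card (permutations_of_multiset M) * (\<Prod>u\<in>#M. gw_uweight \<xi> u)"
proof -
  let ?P = "permutations_of_multiset M"
  let ?L = "\<lambda>us. {ts. map forget ts = us}"
  have "{t. forget t = UNode M} = PNode ` (\<Union>us\<in>?P. ?L us)"
  proof (intro equalityI subsetI)
    fix t assume "t \<in> {t. forget t = UNode M}"
    then show "t \<in> PNode ` (\<Union>us\<in>?P. ?L us)"
      by (cases t) (auto simp: permutations_of_multiset_def)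
  qed (auto simp: permutations_of_multiset_def)
  then have "gw_uweight \<xi> (UNode M) = (\<Sum>ts\<in>(\<Union>us\<in>?P. ?L us). gw_w \<xi> (PNode ts))"
    by (simp add: gw_uweight_def sum.reindex inj_on_def)
  also have "\<dots> = (\<Sum>us\<in>?P. \<Sum>ts\<in>?L us. gw_w \<xi> (PNode ts))"
    by (rule sum.UNION_disjoint) (auto simp: finite_map_forget_eq)
  also have "\<dots> = (\<Sum>us\<in>?P. pmf \<xi> (size M) * (\<Prod>u\<in>#M. gw_uweight \<xi> u))"
  proof (rule sum.cong)
    fix us assume "us \<in> ?P"
    then have us: "mset us = M" by (simp add: permutations_of_multiset_def)
    have "(\<Sum>ts\<in>?L us. gw_w \<xi> (PNode ts)) = pmf \<xi> (size M) * (\<Sum>ts\<in>?L us. \<Prod>t\<leftarrow>ts. gw_w \<xi> t)"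
    proof (unfold sum_distrib_left, intro sum.cong refl)
      fix ts assume "ts \<in> ?L us"
      then have "length ts = size M" using us by (metis length_map mem_Collect_eq size_mset)
      then show "gw_w \<xi> (PNode ts) = pmf \<xi> (size M) * (\<Prod>t\<leftarrow>ts. gw_w \<xi> t)" by simp
    qed
    also have "\<dots> = pmf \<xi> (size M) * (\<Prod>u\<in>#M. gw_uweight \<xi> u)"
      by (simp add: sum_map_forget_eq prod_mset_prod_list flip: us mset_map)
    finally show "(\<Sum>ts\<in>?L us. gw_w \<xi> (PNode ts)) = pmf \<xi> (size M) * (\<Prod>u\<in>#M. gw_uweight \<xi> u)" .
  qed simp
  finally show ?thesis by simp
qed

lemma prod_gw_cond:
  assumes len: "length ts = length ks"
  shows "(\<Prod>i<length ts. gw_cond \<xi> (ks ! i) (ts ! i))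
       = (if map utsize ts = ks
          then (\<Prod>u\<leftarrow>ts. gw_uweight \<xi> u) / (\<Prod>k\<leftarrow>ks. GW_size \<xi> k) else 0)"
proof (cases "map utsize ts = ks")
  case True
  then have "(\<Prod>i<length ts. gw_cond \<xi> (ks ! i) (ts ! i))
      = (\<Prod>i<length ts. gw_uweight \<xi> (ts ! i)) / (\<Prod>i<length ts. GW_size \<xi> (ks ! i))"
    by (auto simp: gw_cond_eq_gw_uweight prod_dividef intro!: prod.cong)
  with True len show ?thesis
    by (simp add: prod.list_conv_set_nth atLeast0LessThan)
next
  case False
  then obtain i where "i < length ts" "utsize (ts ! i) \<noteq> ks ! i"
    using len by (auto simp: list_eq_iff_nth_eq)
  with False show ?thesis
    by (auto simp: gw_cond_eq_gw_uweight intro!: prod_zero)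
qed

subsection \<open>Orderings of a multiset grouped by a function\<close>

text \<open>A permutation of positions carrying \<open>ks\<close> to \<open>ks'\<close> maps the fibre of \<open>map f\<close> over \<open>ks\<close>
  injectively into the fibre over \<open>ks'\<close>, so all fibres have the same size.\<close>

lemma card_permutations_of_multiset_fibre_le:
  assumes ks: "ks \<in> permutations_of_multiset (image_mset f M)"
    and ks': "ks' \<in> permutations_of_multiset (image_mset f M)"
  shows "card {ts \<in> permutations_of_multiset M. map f ts = ks}
       \<le> card {ts \<in> permutations_of_multiset M. map f ts = ks'}"
proof -
  have "mset ks' = mset ks" using ks ks' by (simp add: permutations_of_multiset_def)
  then obtain \<sigma> where \<sigma>: "\<sigma> permutes {..<length ks}" "permute_list \<sigma> ks = ks'"
    by (rule mset_eq_permutation)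
  let ?A = "{ts \<in> permutations_of_multiset M. map f ts = ks}"
  let ?B = "{ts \<in> permutations_of_multiset M. map f ts = ks'}"
  have \<sigma>_ts: "\<sigma> permutes {..<length ts}" if "ts \<in> ?A" for ts
  proof -
    from that have "length (map f ts) = length ks" by simp
    with \<sigma>(1) show ?thesis by simp
  qed
  show ?thesis
  proof (rule card_inj_on_le)
    have cancel: "permute_list (inv \<sigma>) (permute_list \<sigma> ts) = ts" if "ts \<in> ?A" for ts
    proof -
      have "inv \<sigma> permutes {..<length ts}" using \<sigma>_ts[OF that] by (rule permutes_inv)
      then have "permute_list (inv \<sigma>) (permute_list \<sigma> ts) = permute_list (\<sigma> \<circ> inv \<sigma>) ts"
        by (rule permute_list_compose[symmetric])
      also have "\<sigma> \<circ> inv \<sigma> = id" using \<sigma>_ts[OF that] by (rule permutes_inv_o)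
      finally show ?thesis by simp
    qed
    show "inj_on (permute_list \<sigma>) ?A"
    proof (rule inj_onI)
      fix xs ys assume "xs \<in> ?A" "ys \<in> ?A" "permute_list \<sigma> xs = permute_list \<sigma> ys"
      then show "xs = ys" using cancel by metis
    qed
    show "permute_list \<sigma> ` ?A \<subseteq> ?B"
      using \<sigma>_ts \<sigma>(2)
      by (auto simp: permutations_of_multiset_def simp flip: permute_list_map)
  qed simp
qed

lemma card_permutations_of_multiset_fibre:
  assumes "ks \<in> permutations_of_multiset (image_mset f M)"
  shows "card (permutations_of_multiset M)
       = card (permutations_of_multiset (image_mset f M))
         * card {ts \<in> permutations_of_multiset M. map f ts = ks}"
proof -
  have "card (permutations_of_multiset M)
      = (\<Sum>ks'\<in>map f ` permutations_of_multiset M. card {ts \<in> permutations_of_multiset M. map f ts = ks'})"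
    by (subst card_eq_sum, subst sum.image_gen) simp_all
  also have "\<dots> = (\<Sum>ks'\<in>permutations_of_multiset (image_mset f M).
                   card {ts \<in> permutations_of_multiset M. map f ts = ks})"
    using card_permutations_of_multiset_fibre_le[OF _ assms]
      card_permutations_of_multiset_fibre_le[OF assms]
    by (intro sum.cong) (auto simp: permutations_of_multiset_image intro: antisym)
  finally show ?thesis by simp
qed

lemma real_card_permutations_of_multiset:
  "real (card (permutations_of_multiset A)) = fact (size A) / (\<Prod>x\<in>set_mset A. fact (count A x))"
proof -
  have "(\<Prod>x\<in>set_mset A. fact (count A x) :: nat) dvd fact (size A)"
    by (rule card_permutations_of_multiset(2))
  then show ?thesis
    by (simp add: card_permutations_of_multiset(1) real_of_nat_div of_nat_prod)
qed

lemma length_sorted_list_of_multiset [simp]: "length (sorted_list_of_multiset M) = size M"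
  by (metis mset_sorted_list_of_multiset size_mset)

lemma size_le_sum_mset_of_pos:
  fixes lam :: "nat multiset"
  assumes "\<forall>j\<in>#lam. 0 < j"
  shows "size lam \<le> sum_mset lam"
  using assms by (induction lam) auto

lemma part_le_sum_mset: "(j::nat) \<in># lam \<Longrightarrow> j \<le> sum_mset lam"
  by (auto dest: multi_member_split)

lemma partitions_1: "partitions 1 = {{#1#}}"
proof safe
  fix lam assume lam: "lam \<in> partitions 1"
  then have "size lam \<le> 1" "lam \<noteq> {#}"
    using size_le_sum_mset_of_pos[of lam] by (auto simp: partitions_def)
  then have "size lam = 1" by (simp add: le_Suc_eq)
  then obtain j where "lam = {#j#}" using size_1_singleton_mset by blast
  with lam show "lam = {#1#}" by (simp add: partitions_def)
qed (simp add: partitions_def)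

lemma finite_partitions: "finite (partitions n)"
proof (rule finite_subset)
  show "partitions n \<subseteq> mset ` {xs. set xs \<subseteq> {0..n} \<and> length xs \<le> n}"
  proof
    fix lam assume lam: "lam \<in> partitions n"
    then have "set (sorted_list_of_multiset lam) \<subseteq> {0..n}" "size lam \<le> n"
      using part_le_sum_mset size_le_sum_mset_of_pos by (auto simp: partitions_def)
    then show "lam \<in> mset ` {xs. set xs \<subseteq> {0..n} \<and> length xs \<le> n}"
      by (intro image_eqI[of _ _ "sorted_list_of_multiset lam"]) auto
  qed
qed (intro finite_imageI finite_lists_length_le, simp)

lemma gw_q_eq:
  assumes "n \<ge> 1" "lam \<in> partitions n" "GW_size \<xi> (n + 1) > 0"
  shows "gw_q \<xi> n lam = card (permutations_of_multiset lam) * pmf \<xi> (size lam)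
            * (\<Prod>k\<in>#lam. GW_size \<xi> k) / GW_size \<xi> (n + 1)"
proof (cases "n = 1")
  case True
  with assms have lam: "lam = {#1#}" and "pmf \<xi> 1 * pmf \<xi> 0 > 0"
    using partitions_1 GW_size_2[of \<xi>] by (auto simp: numeral_2_eq_2)
  then have "pmf \<xi> 1 \<noteq> 0" "pmf \<xi> 0 \<noteq> 0" by auto
  with True lam show ?thesis
    using GW_size_1[of \<xi>] GW_size_2[of \<xi>] by (simp add: gw_q_def partitions_def numeral_2_eq_2)
next
  case False
  with assms show ?thesis by (simp add: gw_q_def real_card_permutations_of_multiset)
qed

lemma nth_sorted_list_of_multiset_in: "i < size M \<Longrightarrow> sorted_list_of_multiset M ! i \<in># M"
  by (metis length_sorted_list_of_multiset nth_mem set_sorted_list_of_multiset)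

subsection \<open>The recursive description of the conditioned tree\<close>

text \<open>The inner sum in the definition of \<open>Qlaw\<close>: the probability that independent trees
  with laws \<open>Q \<lambda>\<^sub>i\<close> form the multiset \<open>M\<close>.\<close>

definition children_law :: "(nat \<Rightarrow> utree \<Rightarrow> real) \<Rightarrow> nat multiset \<Rightarrow> utree multiset \<Rightarrow> real" where
  "children_law Q lam M =
     (\<Sum>ts\<in>{ts. mset ts = M}.
        if length ts = size lam
        then (\<Prod>i<length ts. Q (sorted_list_of_multiset lam ! i) (ts ! i)) else 0)"

lemma children_law_cong:
  assumes "\<And>k. k \<in># lam \<Longrightarrow> Q k = Q' k"
  shows "children_law Q lam M = children_law Q' lam M"
proof -
  have eq: "Q k u = Q' k u" if "k \<in># lam" for k u
    using assms that by simp
  show ?thesis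
    unfolding children_law_def by (auto intro!: sum.cong prod.cong eq nth_sorted_list_of_multiset_in)
qed

lemma Qlaw_Suc_Suc:
  "Qlaw q (Suc (Suc n)) (UNode M)
     = (\<Sum>lam\<in>partitions (Suc n). q (Suc n) lam * children_law (Qlaw q) lam M)"
proof -
  have "Qlaw q (Suc (Suc n)) (UNode M)
      = (\<Sum>lam\<in>partitions (Suc n).
           q (Suc n) lam * children_law (\<lambda>k u. if k \<le> Suc n then Qlaw q k u else 0) lam M)"
    by (simp add: children_law_def)
  also have "\<dots> = (\<Sum>lam\<in>partitions (Suc n). q (Suc n) lam * children_law (Qlaw q) lam M)"
    by (intro sum.cong refl arg_cong[where f = "(*) _"] children_law_cong)
       (auto simp: partitions_def dest: part_le_sum_mset)
  finally show ?thesis .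
qed

lemma children_law_gw_cond:
  "children_law (gw_cond \<xi>) lam M
     = (if lam = image_mset utsize M
        then card (permutations_of_multiset M) / card (permutations_of_multiset lam)
             * (\<Prod>u\<in>#M. gw_uweight \<xi> u) / (\<Prod>k\<in>#lam. GW_size \<xi> k)
        else 0)"
proof -
  let ?ks = "sorted_list_of_multiset lam"
  let ?F = "{ts \<in> permutations_of_multiset M. map utsize ts = ?ks}"
  let ?c = "(\<Prod>u\<in>#M. gw_uweight \<xi> u) / (\<Prod>k\<in>#lam. GW_size \<xi> k)"
  have "children_law (gw_cond \<xi>) lam M
      = (\<Sum>ts\<in>permutations_of_multiset M. if map utsize ts = ?ks then ?c else 0)"
    unfolding children_law_def
  proof (rule sum.cong)
    fix ts assume "ts \<in> permutations_of_multiset M"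
    then have ts: "mset ts = M" by (simp add: permutations_of_multiset_def)
    have "(\<Prod>u\<leftarrow>ts. gw_uweight \<xi> u) = (\<Prod>u\<in>#M. gw_uweight \<xi> u)"
      by (simp add: prod_mset_prod_list flip: ts mset_map)
    moreover have "(\<Prod>k\<leftarrow>?ks. GW_size \<xi> k) = (\<Prod>k\<in>#lam. GW_size \<xi> k)"
      by (metis mset_map mset_sorted_list_of_multiset prod_mset_prod_list)
    moreover have "map utsize ts \<noteq> ?ks" if "length ts \<noteq> size lam"
      using that by (metis length_map length_sorted_list_of_multiset)
    ultimately show "(if length ts = size lam then \<Prod>i<length ts. gw_cond \<xi> (?ks ! i) (ts ! i) else 0)
        = (if map utsize ts = ?ks then ?c else 0)"
      using prod_gw_cond[of ts ?ks \<xi>] by (cases "length ts = size lam") simp_all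
  qed (simp add: permutations_of_multiset_def)
  also have "\<dots> = card ?F * ?c"
    by (simp flip: sum.inter_filter)
  also have "\<dots> = (if lam = image_mset utsize M
        then card (permutations_of_multiset M) / card (permutations_of_multiset lam) * ?c else 0)"
  proof (cases "lam = image_mset utsize M")
    case True
    then have "?ks \<in> permutations_of_multiset (image_mset utsize M)"
      by (simp add: permutations_of_multiset_def)
    with True have "card (permutations_of_multiset M) = card (permutations_of_multiset lam) * card ?F"
      using card_permutations_of_multiset_fibre by blast
    moreover have "card (permutations_of_multiset lam) \<noteq> 0"
      by (simp add: card_eq_0_iff)
    ultimately have "real (card ?F) = card (permutations_of_multiset M) / card (permutations_of_multiset lam)"
      by (simp add: field_simps)
    with True show ?thesis by simp
  next
    case False
    then have "?F = {}"
      by (auto simp: permutations_of_multiset_def) (metis mset_map mset_sorted_list_of_multiset)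
    with False show ?thesis by simp
  qed
  finally show ?thesis by simp
qed

lemma gw_cond_Suc_Suc_eq_Qlaw:
  assumes IH: "\<And>k. 1 \<le> k \<Longrightarrow> k \<le> Suc n \<Longrightarrow> GW_size \<xi> k > 0 \<Longrightarrow> gw_cond \<xi> k = Qlaw (gw_q \<xi>) k"
    and pos: "GW_size \<xi> (Suc (Suc n)) > 0"
  shows "gw_cond \<xi> (Suc (Suc n)) (UNode M) = Qlaw (gw_q \<xi>) (Suc (Suc n)) (UNode M)"
proof -
  let ?q = "gw_q \<xi>" and ?G = "GW_size \<xi>" and ?P = "partitions (Suc n)"
  let ?perms = "\<lambda>A. real (card (permutations_of_multiset A))"
  define lam0 where "lam0 = image_mset utsize M"
  have summand: "?q (Suc n) lam * children_law (Qlaw ?q) lam M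
      = (if lam = lam0 then ?q (Suc n) lam0 * children_law (gw_cond \<xi>) lam0 M else 0)"
    if lam: "lam \<in> ?P" for lam
  proof (cases "?q (Suc n) lam = 0")
    case False
    with lam pos have "(\<Prod>k\<in>#lam. ?G k) \<noteq> 0" by (simp add: gw_q_eq)
    then have "?G k > 0" if "k \<in># lam" for k
      using that GW_size_nonneg[of \<xi> k] by (auto simp: less_le)
    moreover have "1 \<le> k \<and> k \<le> Suc n" if "k \<in># lam" for k
      using that lam part_le_sum_mset[OF that] by (auto simp: partitions_def Suc_le_eq)
    ultimately have "children_law (Qlaw ?q) lam M = children_law (gw_cond \<xi>) lam M"
      by (intro children_law_cong) (simp add: IH)
    then show ?thesis by (simp add: children_law_gw_cond lam0_def)
  qed auto
  have "Qlaw ?q (Suc (Suc n)) (UNode M) = (\<Sum>lam\<in>?P. ?q (Suc n) lam * children_law (Qlaw ?q) lam M)"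
    by (rule Qlaw_Suc_Suc)
  also have "\<dots> = (\<Sum>lam\<in>?P. if lam = lam0 then ?q (Suc n) lam0 * children_law (gw_cond \<xi>) lam0 M else 0)"
    using summand by (rule sum.cong[OF refl])
  finally have Qlaw: "Qlaw ?q (Suc (Suc n)) (UNode M)
      = (if lam0 \<in> ?P then ?q (Suc n) lam0 * children_law (gw_cond \<xi>) lam0 M else 0)"
    by (simp add: finite_partitions)
  have lam0_mem: "lam0 \<in> ?P \<longleftrightarrow> utsize (UNode M) = Suc (Suc n)"
    by (auto simp: partitions_def lam0_def)
  show ?thesis
  proof (cases "lam0 \<in> ?P")
    case False
    with Qlaw lam0_mem show ?thesis by (simp add: gw_cond_eq_gw_uweight)
  next
    case True
    have "(\<Prod>u\<in>#M. gw_uweight \<xi> u) = 0" if "(\<Prod>k\<in>#lam0. ?G k) = 0"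
    proof -
      from that obtain u where "u \<in># M" "?G (utsize u) = 0" by (auto simp: lam0_def)
      with gw_uweight_le_GW_size[of \<xi> u] gw_uweight_nonneg[of \<xi> u] show ?thesis by auto
    qed
    moreover have "?perms lam0 \<noteq> 0" by (simp add: card_eq_0_iff)
    ultimately have "?perms lam0 * pmf \<xi> (size M) * (\<Prod>k\<in>#lam0. ?G k) / ?G (Suc (Suc n))
          * (?perms M / ?perms lam0 * (\<Prod>u\<in>#M. gw_uweight \<xi> u) / (\<Prod>k\<in>#lam0. ?G k))
        = pmf \<xi> (size M) * ?perms M * (\<Prod>u\<in>#M. gw_uweight \<xi> u) / ?G (Suc (Suc n))"
      by (cases "(\<Prod>k\<in>#lam0. ?G k) = 0") (simp_all add: field_simps)
    with True Qlaw lam0_mem pos show ?thesis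
      by (simp add: gw_q_eq children_law_gw_cond gw_cond_eq_gw_uweight gw_uweight_UNode lam0_def)
  qed
qed

lemma gw_cond_eq_Qlaw:
  "1 \<le> n \<Longrightarrow> GW_size \<xi> n > 0 \<Longrightarrow> gw_cond \<xi> n = Qlaw (gw_q \<xi>) n"
proof (induction n rule: less_induct)
  case (less n)
  consider (leaf) "n = 1" | (node) m where "n = Suc (Suc m)"
    using less.prems(1) by (cases n; cases "n - 1") auto
  then show ?case
  proof cases
    case leaf
    with less.prems have "pmf \<xi> 0 > 0" using GW_size_1[of \<xi>] by simp
    show ?thesis
    proof
      fix u
      show "gw_cond \<xi> n u = Qlaw (gw_q \<xi>) n u"
        using leaf \<open>pmf \<xi> 0 > 0\<close> utsize_eq_1_iff[of u] GW_size_1[of \<xi>]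
        by (auto simp: gw_cond_eq_gw_uweight gw_uweight_UNode)
    qed
  next
    case (node m)
    show ?thesis
    proof
      fix u
      obtain M where "u = UNode M" by (cases u)
      moreover have "gw_cond \<xi> (Suc (Suc m)) (UNode M) = Qlaw (gw_q \<xi>) (Suc (Suc m)) (UNode M)"
        using less node by (intro gw_cond_Suc_Suc_eq_Qlaw) auto
      ultimately show "gw_cond \<xi> n u = Qlaw (gw_q \<xi>) n u" using node by simp
    qed
  qed
qed

subsection \<open>Splitting law and sums of independent sizes\<close>

lemma tau_prob_1: "tau_prob \<xi> 1 n = GW_size \<xi> n"
proof -
  have "{xs. length xs = 1 \<and> sum_list xs = n} = {[n]}"
    by (auto simp: length_Suc_conv)
  then show ?thesis by (simp add: tau_prob_def)
qed

lemma rearr_prob_eq: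
  "rearr_prob \<xi> p n lam
     = (if size lam = p \<and> sum_mset lam = n
        then card (permutations_of_multiset lam) * (\<Prod>k\<in>#lam. GW_size \<xi> k) else 0)"
proof -
  have "{xs. length xs = p \<and> sum_list xs = n \<and> mset xs = lam}
      = (if size lam = p \<and> sum_mset lam = n then permutations_of_multiset lam else {})"
    by (auto simp: permutations_of_multiset_def simp flip: sum_mset_sum_list)
  moreover have "(\<Prod>k\<leftarrow>xs. GW_size \<xi> k) = (\<Prod>k\<in>#lam. GW_size \<xi> k)"
    if "xs \<in> permutations_of_multiset lam" for xs
    using that by (auto simp: permutations_of_multiset_def prod_mset_prod_list simp flip: mset_map)
  ultimately show ?thesis by (simp add: rearr_prob_def)
qed

lemma rearr_prob_eq_0: "lam \<notin> partitions n \<Longrightarrow> rearr_prob \<xi> p n lam = 0"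
  using GW_size_0[of \<xi>] by (force simp: rearr_prob_eq partitions_def)

lemma tau_prob_eq_sum_rearr_prob:
  "tau_prob \<xi> p n = (\<Sum>lam\<in>{lam \<in> partitions n. size lam = p}. rearr_prob \<xi> p n lam)"
proof -
  let ?S = "{xs. length xs = p \<and> sum_list xs = n}"
  have "?S \<subseteq> {xs. set xs \<subseteq> {0..n} \<and> length xs = p}"
    using member_le_sum_list by fastforce
  then have fin: "finite ?S"
    by (rule finite_subset) (intro finite_lists_length_eq, simp)
  have "tau_prob \<xi> p n = (\<Sum>lam\<in>mset ` ?S. \<Sum>xs\<in>{xs \<in> ?S. mset xs = lam}. \<Prod>k\<leftarrow>xs. GW_size \<xi> k)"
    unfolding tau_prob_def by (rule sum.image_gen[OF fin])
  also have "\<dots> = (\<Sum>lam\<in>mset ` ?S. rearr_prob \<xi> p n lam)"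
    by (simp add: rearr_prob_def conj_assoc)
  also have "\<dots> = (\<Sum>lam\<in>{lam \<in> partitions n. size lam = p}. rearr_prob \<xi> p n lam)"
  proof (rule sum.mono_neutral_right)
    show "{lam \<in> partitions n. size lam = p} \<subseteq> mset ` ?S"
    proof
      fix lam assume "lam \<in> {lam \<in> partitions n. size lam = p}"
      then have "sorted_list_of_multiset lam \<in> ?S"
        by (simp add: partitions_def flip: sum_mset_sum_list)
      then show "lam \<in> mset ` ?S" by (metis image_eqI mset_sorted_list_of_multiset)
    qed
    show "\<forall>lam\<in>mset ` ?S - {lam \<in> partitions n. size lam = p}. rearr_prob \<xi> p n lam = 0"
      by (auto intro: rearr_prob_eq_0)
  qed (use fin in simp)
  finally show ?thesis .
qed

lemma gw_q_eq_rearr_prob: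
  assumes "n \<ge> 1" "GW_size \<xi> (n + 1) > 0"
  shows "gw_q \<xi> n lam = pmf \<xi> (size lam) * rearr_prob \<xi> (size lam) n lam / GW_size \<xi> (n + 1)"
proof (cases "lam \<in> partitions n")
  case True
  with assms show ?thesis by (simp add: gw_q_eq rearr_prob_eq partitions_def)
next
  case False
  then show ?thesis by (simp add: gw_q_def rearr_prob_eq_0)
qed

lemma sum_gw_q_size_eq:
  assumes "n \<ge> 1" "GW_size \<xi> (n + 1) > 0"
  shows "(\<Sum>lam\<in>{lam \<in> partitions n. size lam = p}. gw_q \<xi> n lam)
       = pmf \<xi> p * tau_prob \<xi> p n / tau_prob \<xi> 1 (n + 1)"
proof -
  have "(\<Sum>lam\<in>{lam \<in> partitions n. size lam = p}. gw_q \<xi> n lam)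
      = (\<Sum>lam\<in>{lam \<in> partitions n. size lam = p}. pmf \<xi> p * rearr_prob \<xi> p n lam / GW_size \<xi> (n + 1))"
    using assms by (intro sum.cong) (auto simp: gw_q_eq_rearr_prob)
  also have "\<dots> = pmf \<xi> p * tau_prob \<xi> p n / GW_size \<xi> (n + 1)"
    by (simp only: tau_prob_eq_sum_rearr_prob sum_distrib_left sum_divide_distrib)
  finally show ?thesis unfolding tau_prob_1 .
qed

lemma gw_q_cond_size_eq_rearr_prob:
  assumes "n \<ge> 1" "GW_size \<xi> (n + 1) > 0"
    and pos: "(\<Sum>mu\<in>{mu \<in> partitions n. size mu = p}. gw_q \<xi> n mu) > 0"
  shows "(if size lam = p then gw_q \<xi> n lam else 0)
           / (\<Sum>mu\<in>{mu \<in> partitions n. size mu = p}. gw_q \<xi> n mu)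
       = rearr_prob \<xi> p n lam / tau_prob \<xi> p n"
proof -
  have sum: "(\<Sum>mu\<in>{mu \<in> partitions n. size mu = p}. gw_q \<xi> n mu)
      = pmf \<xi> p * tau_prob \<xi> p n / GW_size \<xi> (n + 1)"
    using sum_gw_q_size_eq[OF assms(1,2), of p] unfolding tau_prob_1 .
  with pos have "pmf \<xi> p \<noteq> 0" "tau_prob \<xi> p n \<noteq> 0" by auto
  moreover have "(if size lam = p then gw_q \<xi> n lam else 0)
      = pmf \<xi> p * rearr_prob \<xi> p n lam / GW_size \<xi> (n + 1)"
    using assms(1,2) by (simp add: gw_q_eq_rearr_prob rearr_prob_eq)
  ultimately show ?thesis
    using assms(2) unfolding sum by (simp add: field_simps)
qed

theorem proposition14:
  fixes \<xi> :: "nat pmf"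
  assumes "pmf \<xi> 0 > 0"
    and "(\<lambda>k. real k * pmf \<xi> k) sums 1"
    and "generates_int (set_pmf \<xi>)"
  shows "(\<forall>n\<ge>1. GW_size \<xi> n > 0 \<longrightarrow> gw_cond \<xi> n = Qlaw (gw_q \<xi>) n)
       \<and> (\<forall>n\<ge>1. GW_size \<xi> (n + 1) > 0 \<longrightarrow> (\<forall>p.
            (\<Sum>lam\<in>{lam\<in>partitions n. size lam = p}. gw_q \<xi> n lam)
              = pmf \<xi> p * tau_prob \<xi> p n / tau_prob \<xi> 1 (n + 1)
          \<and> ((\<Sum>lam\<in>{lam\<in>partitions n. size lam = p}. gw_q \<xi> n lam) > 0 \<longrightarrow>
              (\<forall>lam. (if size lam = p then gw_q \<xi> n lam else 0)
                       / (\<Sum>mu\<in>{mu\<in>partitions n. size mu = p}. gw_q \<xi> n mu)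
                     = rearr_prob \<xi> p n lam / tau_prob \<xi> p n))))"
  using gw_cond_eq_Qlaw sum_gw_q_size_eq gw_q_cond_size_eq_rearr_prob by blast

end
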